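(* Let $\lambda<\eta$, $\theta_k,z_k\in\mathbb{R}^d$ with $z_k\ne0$ and $\|z_k-\nabla f(\theta_k)\|\le(1-\eta)\|z_k\|$. Let $\alpha_k\in\mathbb{R}$, $\theta_{k+1}=\theta_k-\alpha_kz_k$, $\epsilon_k,\epsilon_{k+1}\ge0$, and $\tilde{x}(\theta_k),\tilde{x}(\theta_{k+1})$ with $\|\tilde{x}(\theta_j)-\hat{x}(\theta_j)\|\le\epsilon_j$ ($j=k,k+1$). Let $w_k=\|\nabla g(\tilde{x}(\theta_k))\|+\|\nabla g(\tilde{x}(\theta_{k+1}))\|$, $\bar{\epsilon}_k=\max\{\epsilon_k,\epsilon_{k+1}\}$ and $$s_k=\frac{1}{2L_{\nabla g}}\Big(\sqrt{w_k^2+\tfrac{L_{\nabla g}}{L_{\nabla f}}(\eta-\lambda)^2\|z_k\|^2}-w_k\Big).$$ If $\bar{\epsilon}_k\in[0,s_k)$, then $$\hat{s}_k=\sqrt{(\eta-\lambda)^2-\frac{4L_{\nabla f}(w_k\bar{\epsilon}_k+L_{\nabla g}\bar{\epsilon}_k^2)}{\|z_k\|^2}}$$ is a positive real number, the numbers $\underline{\alpha}_k=\frac{1}{L_{\nabla f}}(\eta-\lambda-\hat{s}_k)$, $\overline{\alpha}_k=\frac{1}{L_{\nabla f}}(\eta-\lambda+\hat{s}_k)$ satisfy $0\le\underline{\alpha}_k<\overline{\alpha}_k$, and if $\alpha_k\in[\underline{\alpha}_k,\overline{\alpha}_k]$ then $\psi(\alpha_k)\le0$. Moreover, viewing $\hat{s}_k,\underline{\alpha}_k,\overline{\alpha}_k$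 as functions of $\bar{\epsilon}_k\in[0,s_k)$ with $w_k$ and $z_k$ fixed, $\hat{s}_k$ is monotonically decreasing in $\bar{\epsilon}_k$, $\lim_{\bar{\epsilon}_k\to0}\underline{\alpha}_k=0$ and $\lim_{\bar{\epsilon}_k\to0}\overline{\alpha}_k=\frac{2(\eta-\lambda)}{L_{\nabla f}}>0$.
   Context: Standing: $0<\eta<1$. $g:\mathbb{R}^n\to\mathbb{R}$ continuously differentiable with $L_{\nabla g}$-Lipschitz gradient, $L_{\nabla g}>0$; $\hat{x}(\theta)=\arg\min_xh(x,\theta)$ for a lower-level function $h$ strongly convex in $x$; $f(\theta)=g(\hat{x}(\theta))$ continuously differentiable with $L_{\nabla f}$-Lipschitz gradient, $L_{\nabla f}>0$. $\psi(\alpha_k)=\overline{U}(\tilde{x}(\theta_{k+1}),\epsilon_{k+1})-\underline{U}(\tilde{x}(\theta_k),\epsilon_k)+\lambda\alpha_k\|z_k\|^2$ with $\overline{U}(x,\epsilon)=g(x)+\|\nabla g(x)\|\epsilon+\frac{L_{\nabla g}}{2}\epsilon^2$, $\underline{U}(x,\epsilon)=g(x)-\|\nabla g(x)\|\epsilon-\frac{L_{\nabla g}}{2}\epsilon^2$. *)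

theory Defs
  imports "HOL-Analysis.Analysis"
begin

definition strongly_convex :: "('b::real_normed_vector \<Rightarrow> real) \<Rightarrow> bool" where
  "strongly_convex h \<longleftrightarrow> (\<exists>mu>0. \<forall>x y. \<forall>t::real. 0 \<le> t \<and> t \<le> 1 \<longrightarrow>
      h (t *\<^sub>R x + (1 - t) *\<^sub>R y) \<le> t * h x + (1 - t) * h y - mu / 2 * t * (1 - t) * (norm (x - y))\<^sup>2)"

definition Ubar :: "('b \<Rightarrow> real) \<Rightarrow> ('b \<Rightarrow> 'b::real_normed_vector) \<Rightarrow> real \<Rightarrow> 'b \<Rightarrow> real \<Rightarrow> real" where
  "Ubar g Dg Lg x eps = g x + norm (Dg x) * eps + Lg / 2 * eps\<^sup>2"

definition Ulow :: "('b \<Rightarrow> real) \<Rightarrow> ('b \<Rightarrow> 'b::real_normed_vector) \<Rightarrow> real \<Rightarrow> 'b \<Rightarrow> real \<Rightarrow> real" where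
  "Ulow g Dg Lg x eps = g x - norm (Dg x) * eps - Lg / 2 * eps\<^sup>2"

text \<open>psi(alpha_k) with theta_{k+1} given explicitly (theta1), theta_k = theta0.\<close>
definition psi :: "('b \<Rightarrow> real) \<Rightarrow> ('b \<Rightarrow> 'b::real_normed_vector) \<Rightarrow> real \<Rightarrow> real \<Rightarrow>
    ('a \<Rightarrow> 'b) \<Rightarrow> 'a \<Rightarrow> real \<Rightarrow> 'a \<Rightarrow> real \<Rightarrow> 'a::real_normed_vector \<Rightarrow> real \<Rightarrow> real" where
  "psi g Dg Lg lam xt theta1 eps1 theta0 eps0 z alpha =
     Ubar g Dg Lg (xt theta1) eps1 - Ulow g Dg Lg (xt theta0) eps0 + lam * alpha * (norm z)\<^sup>2"

definition shat :: "real \<Rightarrow> real \<Rightarrow> real \<Rightarrow> real \<Rightarrow> real \<Rightarrow> 'a::real_normed_vector \<Rightarrow> real \<Rightarrow> real" where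
  "shat eta lam Lf Lg w z e =
     sqrt ((eta - lam)\<^sup>2 - 4 * Lf * (w * e + Lg * e\<^sup>2) / (norm z)\<^sup>2)"

definition alpha_low :: "real \<Rightarrow> real \<Rightarrow> real \<Rightarrow> real \<Rightarrow> real \<Rightarrow> 'a::real_normed_vector \<Rightarrow> real \<Rightarrow> real" where
  "alpha_low eta lam Lf Lg w z e = (eta - lam - shat eta lam Lf Lg w z e) / Lf"

definition alpha_up :: "real \<Rightarrow> real \<Rightarrow> real \<Rightarrow> real \<Rightarrow> real \<Rightarrow> 'a::real_normed_vector \<Rightarrow> real \<Rightarrow> real" where
  "alpha_up eta lam Lf Lg w z e = (eta - lam + shat eta lam Lf Lg w z e) / Lf"

end

theory Submission
  imports Defs
begin

text \<open>By the descent lemma \<open>\<bar>g y - g x - \<nabla>g x \<bullet> (y - x)\<bar> \<le> L/2 \<parallel>y - x\<parallel>\<^sup>2\<close>, the unknown value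
  of \<open>g\<close> at the exact solution \<open>xhat \<theta>\<close> lies between \<open>Ulow\<close> and \<open>Ubar\<close> taken at the inexact
  solution \<open>xt \<theta>\<close>. Hence \<open>\<psi>(\<alpha>)\<close> is at most the exact change \<open>f \<theta>\<^sub>k\<^sub>+\<^sub>1 - f \<theta>\<^sub>k + \<lambda>\<alpha>\<parallel>z\<parallel>\<^sup>2\<close>
  plus the error \<open>2(w \<epsilon> + L\<^sub>g \<epsilon>\<^sup>2)\<close>, where \<open>\<epsilon> = max eps0 eps1\<close>. The descent lemma for \<open>f\<close> together
  with \<open>\<nabla>f \<theta>\<^sub>k \<bullet> z \<ge> \<eta>\<parallel>z\<parallel>\<^sup>2\<close> bounds this by a quadratic in \<open>\<alpha>\<close> with roots \<open>alpha_low\<close> and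
  \<open>alpha_up\<close>; the bound on \<open>\<epsilon>\<close> is exactly the condition that its discriminant, a positive multiple
  of \<open>shat\<^sup>2\<close>, is positive.\<close>

lemma has_real_derivative_along_line:
  fixes g :: "'a::real_inner \<Rightarrow> real"
  assumes "GDERIV g (x + t *\<^sub>R v) :> D"
  shows "((\<lambda>t. g (x + t *\<^sub>R v)) has_real_derivative (v \<bullet> D)) (at t)"
proof -
  have "((\<lambda>t. x + t *\<^sub>R v) has_derivative (\<lambda>t. t *\<^sub>R v)) (at t)"
    by (auto intro!: derivative_eq_intros)
  from has_derivative_compose[OF this assms[unfolded gderiv_def]]
  show ?thesis
    by (simp add: o_def has_field_derivative_def inner_commute mult_commute_abs)
qed

lemma lipschitz_gradient_upper_bound:
  fixes g :: "'a::real_inner \<Rightarrow> real"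
  assumes grad: "\<And>x. GDERIV g x :> Dg x" and lip: "L-lipschitz_on UNIV Dg"
  shows "g y \<le> g x + Dg x \<bullet> (y - x) + L / 2 * (norm (y - x))\<^sup>2"
proof -
  define v where "v = y - x"
  define \<phi> where "\<phi> t = g (x + t *\<^sub>R v) - t * (v \<bullet> Dg x) - L / 2 * t\<^sup>2 * (norm v)\<^sup>2" for t
  have \<phi>_deriv: "(\<phi> has_real_derivative v \<bullet> (Dg (x + t *\<^sub>R v) - Dg x) - L * t * (norm v)\<^sup>2) (at t)"
    for t
    unfolding \<phi>_def
    by (rule has_real_derivative_along_line[OF grad] derivative_eq_intros refl
        | simp add: inner_diff_right)+
  have "v \<bullet> (Dg (x + t *\<^sub>R v) - Dg x) \<le> L * t * (norm v)\<^sup>2" if "0 \<le> t" for t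
  proof -
    have "v \<bullet> (Dg (x + t *\<^sub>R v) - Dg x) \<le> norm v * norm (Dg (x + t *\<^sub>R v) - Dg x)"
      by (rule norm_cauchy_schwarz)
    also have "\<dots> \<le> norm v * (L * norm (t *\<^sub>R v))"
      using lipschitz_onD[OF lip, of "x + t *\<^sub>R v" x] by (simp add: dist_norm mult_left_mono)
    also have "\<dots> = L * t * (norm v)\<^sup>2"
      using that by (simp add: power2_eq_square)
    finally show ?thesis .
  qed
  then have "\<phi> 1 \<le> \<phi> 0"
    by (intro deriv_nonpos_imp_antimono[OF \<phi>_deriv]) auto
  then show ?thesis
    by (simp add: \<phi>_def v_def inner_commute)
qed

lemma lipschitz_gradient_quadratic_bound:
  fixes g :: "'a::real_inner \<Rightarrow> real"
  assumes grad: "\<And>x. GDERIV g x :> Dg x" and lip: "L-lipschitz_on UNIV Dg"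
  shows "\<bar>g y - g x - Dg x \<bullet> (y - x)\<bar> \<le> L / 2 * (norm (y - x))\<^sup>2"
proof -
  have "- g y \<le> - g x + (- Dg x) \<bullet> (y - x) + L / 2 * (norm (y - x))\<^sup>2"
    using lip by (intro lipschitz_gradient_upper_bound[of "\<lambda>x. - g x"] GDERIV_minus grad) simp
  with lipschitz_gradient_upper_bound[OF grad lip, of y x] show ?thesis
    unfolding abs_le_iff inner_minus_left by linarith
qed

lemma Ulow_le_le_Ubar:
  fixes g :: "'a::real_inner \<Rightarrow> real"
  assumes grad: "\<And>x. GDERIV g x :> Dg x" and lip: "L-lipschitz_on UNIV Dg"
    and approx: "norm (x - y) \<le> \<epsilon>"
  shows "Ulow g Dg L x \<epsilon> \<le> g y" and "g y \<le> Ubar g Dg L x \<epsilon>"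
proof -
  have "\<bar>Dg x \<bullet> (y - x)\<bar> \<le> norm (Dg x) * \<epsilon>"
    using Cauchy_Schwarz_ineq2[of "Dg x" "y - x"] approx
    by (metis norm_minus_commute mult_left_mono norm_ge_zero order_trans)
  moreover have "L / 2 * (norm (y - x))\<^sup>2 \<le> L / 2 * \<epsilon>\<^sup>2"
    using lipschitz_on_nonneg[OF lip] approx
    by (intro mult_left_mono power_mono) (auto simp: norm_minus_commute)
  ultimately show "Ulow g Dg L x \<epsilon> \<le> g y" "g y \<le> Ubar g Dg L x \<epsilon>"
    using lipschitz_gradient_quadratic_bound[OF grad lip, of y x]
    unfolding Ulow_def Ubar_def abs_le_iff by linarith+
qed

lemma psi_le_decrease_plus_error:
  fixes g :: "'b::real_inner \<Rightarrow> real"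
  assumes grad: "\<And>x. GDERIV g x :> Dg x" and lip: "L-lipschitz_on UNIV Dg"
    and approx0: "norm (xt theta0 - xhat theta0) \<le> eps0"
    and approx1: "norm (xt theta1 - xhat theta1) \<le> eps1"
    and "eps0 \<le> e" "eps1 \<le> e"
  shows "psi g Dg L lam xt theta1 eps1 theta0 eps0 z alpha
    \<le> g (xhat theta1) - g (xhat theta0) + lam * alpha * (norm z)\<^sup>2
      + 2 * ((norm (Dg (xt theta0)) + norm (Dg (xt theta1))) * e + L * e\<^sup>2)"
proof -
  have "0 \<le> eps0" "0 \<le> eps1" "0 \<le> L"
    using approx0 approx1 lipschitz_on_nonneg[OF lip] norm_ge_zero order_trans by blast+
  with \<open>eps0 \<le> e\<close> \<open>eps1 \<le> e\<close> have
    "norm (Dg (xt theta0)) * eps0 \<le> norm (Dg (xt theta0)) * e"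
    "norm (Dg (xt theta1)) * eps1 \<le> norm (Dg (xt theta1)) * e"
    "L * eps0\<^sup>2 \<le> L * e\<^sup>2" "L * eps1\<^sup>2 \<le> L * e\<^sup>2"
    by (auto intro!: mult_left_mono power_mono)
  with Ulow_le_le_Ubar(1)[OF grad lip approx1] Ulow_le_le_Ubar(2)[OF grad lip approx0]
  show ?thesis
    unfolding psi_def Ubar_def Ulow_def by (simp add: algebra_simps)
qed

lemma sufficient_decrease:
  fixes f :: "'a::real_inner \<Rightarrow> real"
  assumes grad: "\<And>x. GDERIV f x :> Df x" and lip: "L-lipschitz_on UNIV Df"
    and direction: "norm (z - Df theta) \<le> (1 - eta) * norm z" and "0 \<le> alpha"
  shows "f (theta - alpha *\<^sub>R z) \<le> f theta - alpha * eta * (norm z)\<^sup>2 + L / 2 * alpha\<^sup>2 * (norm z)\<^sup>2"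
proof -
  have "(z - Df theta) \<bullet> z \<le> (1 - eta) * norm z * norm z"
    using norm_cauchy_schwarz[of "z - Df theta" z] direction
    by (meson mult_right_mono norm_ge_zero order_trans)
  then have "eta * (norm z)\<^sup>2 \<le> Df theta \<bullet> z"
    by (simp add: inner_diff_left power2_norm_eq_inner[symmetric] power2_eq_square algebra_simps)
  then have "alpha * eta * (norm z)\<^sup>2 \<le> alpha * (Df theta \<bullet> z)"
    using \<open>0 \<le> alpha\<close> by (simp add: mult.assoc mult_left_mono)
  with lipschitz_gradient_upper_bound[OF grad lip, of "theta - alpha *\<^sub>R z" theta] show ?thesis
    by (simp add: power_mult_distrib)
qed

lemma shat_zero: "shat eta lam Lf Lg w z 0 = \<bar>eta - lam\<bar>"
  by (simp add: shat_def)

lemma shat_antimono: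
  assumes "0 \<le> Lf" "0 \<le> Lg" "0 \<le> w" "0 \<le> e1" "e1 \<le> e2"
  shows "shat eta lam Lf Lg w z e2 \<le> shat eta lam Lf Lg w z e1"
proof -
  have "w * e1 + Lg * e1\<^sup>2 \<le> w * e2 + Lg * e2\<^sup>2"
    using assms by (intro add_mono mult_left_mono power_mono) auto
  then have "4 * Lf * (w * e1 + Lg * e1\<^sup>2) / (norm z)\<^sup>2 \<le> 4 * Lf * (w * e2 + Lg * e2\<^sup>2) / (norm z)\<^sup>2"
    using assms by (intro divide_right_mono mult_left_mono) auto
  then show ?thesis
    unfolding shat_def by (intro real_sqrt_le_mono) linarith
qed

lemma shat_pos:
  assumes "0 < Lf" "0 < Lg" "0 \<le> w" "z \<noteq> 0" "0 \<le> e"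
    and e_less: "e < (sqrt (w\<^sup>2 + Lg / Lf * (eta - lam)\<^sup>2 * (norm z)\<^sup>2) - w) / (2 * Lg)"
  shows "0 < shat eta lam Lf Lg w z e"
proof -
  have "2 * Lg * e + w < sqrt (w\<^sup>2 + Lg / Lf * (eta - lam)\<^sup>2 * (norm z)\<^sup>2)"
    using e_less \<open>0 < Lg\<close> by (simp add: field_simps)
  moreover have "0 \<le> 2 * Lg * e + w"
    using assms by simp
  ultimately have "(2 * Lg * e + w)\<^sup>2 < w\<^sup>2 + Lg / Lf * (eta - lam)\<^sup>2 * (norm z)\<^sup>2"
    by (meson not_le real_le_lsqrt)
  then have "Lg * (4 * Lf * (w * e + Lg * e\<^sup>2)) < Lg * ((eta - lam)\<^sup>2 * (norm z)\<^sup>2)"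
    using \<open>0 < Lf\<close> by (simp add: field_simps power2_eq_square)
  moreover have "0 < (norm z)\<^sup>2"
    using \<open>z \<noteq> 0\<close> by simp
  ultimately have "4 * Lf * (w * e + Lg * e\<^sup>2) / (norm z)\<^sup>2 < (eta - lam)\<^sup>2"
    using \<open>0 < Lg\<close> by (simp add: pos_divide_less_eq)
  then show ?thesis
    by (simp add: shat_def)
qed

lemma alpha_low_nonneg:
  assumes "lam \<le> eta" "0 < Lf" "0 \<le> Lg" "0 \<le> w" "0 \<le> e"
  shows "0 \<le> alpha_low eta lam Lf Lg w z e"
  using shat_antimono[of Lf Lg w 0 e eta lam z] assms
  unfolding alpha_low_def by (simp add: shat_zero)

lemma alpha_low_less_alpha_up_iff:
  assumes "0 < Lf"
  shows "alpha_low eta lam Lf Lg w z e < alpha_up eta lam Lf Lg w z e \<longleftrightarrow> 0 < shat eta lam Lf Lg w z e"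
  using assms by (simp add: alpha_low_def alpha_up_def divide_less_cancel)

lemma quadratic_nonpos_on_alpha_interval:
  assumes "0 < Lf" "z \<noteq> 0"
    and alpha: "alpha \<in> {alpha_low eta lam Lf Lg w z e .. alpha_up eta lam Lf Lg w z e}"
  shows "Lf / 2 * alpha\<^sup>2 * (norm z)\<^sup>2 - (eta - lam) * alpha * (norm z)\<^sup>2
    + 2 * (w * e + Lg * e\<^sup>2) \<le> 0"
proof -
  define S where "S = shat eta lam Lf Lg w z e"
  define N where "N = (norm z)\<^sup>2"
  have N_pos: "0 < N"
    using \<open>z \<noteq> 0\<close> by (simp add: N_def)
  have "\<bar>Lf * alpha - (eta - lam)\<bar> \<le> S"
    using alpha \<open>0 < Lf\<close> by (simp add: alpha_low_def alpha_up_def S_def field_simps abs_le_iff)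
  then have "0 \<le> S" and "(Lf * alpha - (eta - lam))\<^sup>2 \<le> S\<^sup>2"
    by (auto simp: power2_le_iff_abs_le)
  \<comment> \<open>\<open>sqrt\<close> is negative on negative arguments, so \<open>0 \<le> S\<close> makes the radicand nonnegative.\<close>
  moreover from \<open>0 \<le> S\<close> have "S\<^sup>2 = (eta - lam)\<^sup>2 - 4 * Lf * (w * e + Lg * e\<^sup>2) / N"
    by (simp add: S_def shat_def N_def)
  ultimately have "N * ((Lf * alpha - (eta - lam))\<^sup>2 - (eta - lam)\<^sup>2) + 4 * Lf * (w * e + Lg * e\<^sup>2) \<le> 0"
    using N_pos by (simp add: field_simps)
  moreover have "N * ((Lf * alpha - (eta - lam))\<^sup>2 - (eta - lam)\<^sup>2) + 4 * Lf * (w * e + Lg * e\<^sup>2)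
      = 2 * Lf * (Lf / 2 * alpha\<^sup>2 * N - (eta - lam) * alpha * N + 2 * (w * e + Lg * e\<^sup>2))"
    by (simp add: power2_eq_square algebra_simps)
  ultimately show ?thesis
    using \<open>0 < Lf\<close> by (simp add: N_def mult_le_0_iff)
qed

lemma psi_nonpos_on_alpha_interval:
  fixes g :: "'b::real_inner \<Rightarrow> real" and f :: "'a::real_inner \<Rightarrow> real"
  assumes g_grad: "\<And>x. GDERIV g x :> Dg x" and g_lip: "Lg-lipschitz_on UNIV Dg"
    and f_eq: "\<And>theta. f theta = g (xhat theta)"
    and f_grad: "\<And>theta. GDERIV f theta :> Df theta" and f_lip: "Lf-lipschitz_on UNIV Df"
    and "0 < Lf" "lam \<le> eta" "z \<noteq> 0"
    and direction: "norm (z - Df theta0) \<le> (1 - eta) * norm z"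
    and theta1: "theta1 = theta0 - alpha *\<^sub>R z"
    and approx0: "norm (xt theta0 - xhat theta0) \<le> eps0"
    and approx1: "norm (xt theta1 - xhat theta1) \<le> eps1"
    and "eps0 \<le> e" "eps1 \<le> e"
    and alpha: "alpha \<in> {alpha_low eta lam Lf Lg w z e .. alpha_up eta lam Lf Lg w z e}"
    and w_eq: "w = norm (Dg (xt theta0)) + norm (Dg (xt theta1))"
  shows "psi g Dg Lg lam xt theta1 eps1 theta0 eps0 z alpha \<le> 0"
proof -
  have "0 \<le> e"
    using norm_ge_zero[of "xt theta0 - xhat theta0"] approx0 \<open>eps0 \<le> e\<close> by linarith
  with lipschitz_on_nonneg[OF g_lip] have "0 \<le> alpha"
    using alpha alpha_low_nonneg[of lam eta Lf Lg w e z] \<open>lam \<le> eta\<close> \<open>0 < Lf\<close>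
    by (simp add: w_eq)
  have "psi g Dg Lg lam xt theta1 eps1 theta0 eps0 z alpha
      \<le> f theta1 - f theta0 + lam * alpha * (norm z)\<^sup>2 + 2 * (w * e + Lg * e\<^sup>2)"
    using psi_le_decrease_plus_error[OF g_grad g_lip approx0 approx1 \<open>eps0 \<le> e\<close> \<open>eps1 \<le> e\<close>]
    by (simp add: f_eq w_eq)
  also have "\<dots> \<le> Lf / 2 * alpha\<^sup>2 * (norm z)\<^sup>2 - (eta - lam) * alpha * (norm z)\<^sup>2
      + 2 * (w * e + Lg * e\<^sup>2)"
    using sufficient_decrease[OF f_grad f_lip direction \<open>0 \<le> alpha\<close>]
    unfolding theta1 by (simp add: algebra_simps)
  also have "\<dots> \<le> 0"
    using quadratic_nonpos_on_alpha_interval[OF \<open>0 < Lf\<close> \<open>z \<noteq> 0\<close> alpha] .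
  finally show ?thesis .
qed

lemma isCont_shat: "isCont (shat eta lam Lf Lg w z) e"
  unfolding shat_def divide_inverse by (intro continuous_intros)

lemma tendsto_alpha_low:
  assumes "lam \<le> eta"
  shows "(alpha_low eta lam Lf Lg w z \<longlongrightarrow> 0) (at 0 within S)"
proof -
  have "isCont (alpha_low eta lam Lf Lg w z) 0"
    unfolding alpha_low_def[abs_def] divide_inverse by (intro continuous_intros isCont_shat)
  then have "(alpha_low eta lam Lf Lg w z \<longlongrightarrow> alpha_low eta lam Lf Lg w z 0) (at 0 within S)"
    by (metis continuous_at_imp_continuous_at_within continuous_within)
  with assms show ?thesis
    by (simp add: alpha_low_def shat_zero)
qed

lemma tendsto_alpha_up:
  assumes "lam \<le> eta"
  shows "(alpha_up eta lam Lf Lg w z \<longlongrightarrow> 2 * (eta - lam) / Lf) (at 0 within S)"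
proof -
  have "isCont (alpha_up eta lam Lf Lg w z) 0"
    unfolding alpha_up_def[abs_def] divide_inverse by (intro continuous_intros isCont_shat)
  then have "(alpha_up eta lam Lf Lg w z \<longlongrightarrow> alpha_up eta lam Lf Lg w z 0) (at 0 within S)"
    by (metis continuous_at_imp_continuous_at_within continuous_within)
  with assms show ?thesis
    by (simp add: alpha_up_def shat_zero)
qed

theorem lemma3p8:
  fixes g :: "'b::euclidean_space \<Rightarrow> real" and Dg :: "'b \<Rightarrow> 'b"
    and h :: "'b \<Rightarrow> 'a::euclidean_space \<Rightarrow> real" and xhat :: "'a \<Rightarrow> 'b"
    and f :: "'a \<Rightarrow> real" and Df :: "'a \<Rightarrow> 'a"
    and xt :: "'a \<Rightarrow> 'b"
    and eta lam Lg Lf alpha eps0 eps1 :: real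
    and theta0 theta1 z :: 'a
  assumes eta: "0 < eta" "eta < 1"
    and g_grad: "\<And>x. GDERIV g x :> Dg x"
    and g_cont: "continuous_on UNIV Dg"
    and Lg_pos: "Lg > 0" and Dg_lip: "Lg-lipschitz_on UNIV Dg"
    and h_sc: "\<And>theta. strongly_convex (\<lambda>x. h x theta)"
    and xhat_min: "\<And>theta x. h (xhat theta) theta \<le> h x theta"
    and f_def: "\<And>theta. f theta = g (xhat theta)"
    and f_grad: "\<And>theta. GDERIV f theta :> Df theta"
    and f_cont: "continuous_on UNIV Df"
    and Lf_pos: "Lf > 0" and Df_lip: "Lf-lipschitz_on UNIV Df"
    and lam: "lam < eta"
    and z_nz: "z \<noteq> 0"
    and z_approx: "norm (z - Df theta0) \<le> (1 - eta) * norm z"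
    and theta1: "theta1 = theta0 - alpha *\<^sub>R z"
    and eps_nonneg: "eps0 \<ge> 0" "eps1 \<ge> 0"
    and xt0: "norm (xt theta0 - xhat theta0) \<le> eps0"
    and xt1: "norm (xt theta1 - xhat theta1) \<le> eps1"
    and ebar_lt: "max eps0 eps1 < (sqrt ((norm (Dg (xt theta0)) + norm (Dg (xt theta1)))\<^sup>2
                    + Lg / Lf * (eta - lam)\<^sup>2 * (norm z)\<^sup>2)
                    - (norm (Dg (xt theta0)) + norm (Dg (xt theta1)))) / (2 * Lg)"
  shows "let w = norm (Dg (xt theta0)) + norm (Dg (xt theta1));
             ebar = max eps0 eps1;
             s = (sqrt (w\<^sup>2 + Lg / Lf * (eta - lam)\<^sup>2 * (norm z)\<^sup>2) - w) / (2 * Lg)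
         in shat eta lam Lf Lg w z ebar > 0
          \<and> 0 \<le> alpha_low eta lam Lf Lg w z ebar
          \<and> alpha_low eta lam Lf Lg w z ebar < alpha_up eta lam Lf Lg w z ebar
          \<and> (alpha \<in> {alpha_low eta lam Lf Lg w z ebar .. alpha_up eta lam Lf Lg w z ebar}
               \<longrightarrow> psi g Dg Lg lam xt theta1 eps1 theta0 eps0 z alpha \<le> 0)
          \<and> (\<forall>e1 e2. 0 \<le> e1 \<and> e1 \<le> e2 \<and> e2 < s \<longrightarrow>
                shat eta lam Lf Lg w z e2 \<le> shat eta lam Lf Lg w z e1)
          \<and> ((\<lambda>e. alpha_low eta lam Lf Lg w z e) \<longlongrightarrow> 0) (at_right 0)
          \<and> ((\<lambda>e. alpha_up eta lam Lf Lg w z e) \<longlongrightarrow> 2 * (eta - lam) / Lf) (at_right 0)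
          \<and> 2 * (eta - lam) / Lf > 0"
proof -
  define w where "w = norm (Dg (xt theta0)) + norm (Dg (xt theta1))"
  define e where "e = max eps0 eps1"
  have "0 \<le> w" "0 \<le> e"
    using eps_nonneg by (simp_all add: w_def e_def)
  have shat_e_pos: "0 < shat eta lam Lf Lg w z e"
    using shat_pos[OF Lf_pos Lg_pos \<open>0 \<le> w\<close> z_nz \<open>0 \<le> e\<close>] ebar_lt by (simp add: w_def e_def)
  have "0 \<le> alpha_low eta lam Lf Lg w z e"
    using lam Lf_pos Lg_pos \<open>0 \<le> w\<close> \<open>0 \<le> e\<close> by (intro alpha_low_nonneg) simp_all
  moreover have "alpha_low eta lam Lf Lg w z e < alpha_up eta lam Lf Lg w z e"
    using alpha_low_less_alpha_up_iff[OF Lf_pos] shat_e_pos by blast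
  moreover have "shat eta lam Lf Lg w z e2 \<le> shat eta lam Lf Lg w z e1" if "0 \<le> e1" "e1 \<le> e2" for e1 e2
    using Lf_pos Lg_pos \<open>0 \<le> w\<close> that by (intro shat_antimono) simp_all
  moreover have "psi g Dg Lg lam xt theta1 eps1 theta0 eps0 z alpha \<le> 0"
    if "alpha \<in> {alpha_low eta lam Lf Lg w z e .. alpha_up eta lam Lf Lg w z e}"
    by (rule psi_nonpos_on_alpha_interval[OF g_grad Dg_lip f_def f_grad Df_lip Lf_pos
          less_imp_le[OF lam] z_nz z_approx theta1 xt0 xt1 _ _ that w_def])
      (simp_all add: e_def)
  ultimately show ?thesis
    unfolding Let_def w_def[symmetric] e_def[symmetric]
    using shat_e_pos Lf_pos lam tendsto_alpha_low[OF less_imp_le[OF lam]]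
      tendsto_alpha_up[OF less_imp_le[OF lam]]
    by auto
qed

end
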